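(* For every $n\ge1$ and $0\le m<n$, $$S_{n,m}(0121,0132)=S_{n,m}(0121,1032)=S_{n,m}(0122,0132)=S_{n,m}(0122,1032).$$
   Context: An ascent in a sequence $x_1\cdots x_k$ is an index $j$ with $x_j<x_{j+1}$; $\mathrm{asc}$ denotes the number of ascents. An ascent sequence of length $n$ is a sequence $x_1\cdots x_n$ of non-negative integers with $x_1=0$ and $x_i\le \mathrm{asc}(x_1\cdots x_{i-1})+1$ for $1<i\le n$. A sequence $\pi$ contains a pattern $\tau$ (a sequence of non-negative integers) if some subsequence of $\pi$ is order-isomorphic to $\tau$ (same relative order, equal letters to equal letters); otherwise it avoids $\tau$. $\mathcal{S}_{n,m}(T)$ is the set of ascent sequences of length $n$ with exactly $m$ ascents avoiding all patterns in $T$, and $S_{n,m}(T)$ its cardinality. *)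

theory Defs
  imports Main
begin

definition asc :: "nat list \<Rightarrow> nat" where
  "asc xs = card {j. Suc j < length xs \<and> xs ! j < xs ! Suc j}"

definition ascent_seq :: "nat list \<Rightarrow> bool" where
  "ascent_seq xs \<longleftrightarrow>
     (xs \<noteq> [] \<longrightarrow> xs ! 0 = 0) \<and>
     (\<forall>i. 0 < i \<and> i < length xs \<longrightarrow> xs ! i \<le> asc (take i xs) + 1)"

definition order_iso :: "nat list \<Rightarrow> nat list \<Rightarrow> bool" where
  "order_iso xs ys \<longleftrightarrow> length xs = length ys \<and>
     (\<forall>i<length xs. \<forall>j<length xs. (xs ! i < xs ! j \<longleftrightarrow> ys ! i < ys ! j)
                                    \<and> (xs ! i = xs ! j \<longleftrightarrow> ys ! i = ys ! j))"

definition contains :: "nat list \<Rightarrow> nat list \<Rightarrow> bool" where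
  "contains pi tau \<longleftrightarrow> (\<exists>ys. ys \<in> set (subseqs pi) \<and> order_iso ys tau)"

definition avoids :: "nat list \<Rightarrow> nat list \<Rightarrow> bool" where
  "avoids pi tau \<longleftrightarrow> \<not> contains pi tau"

definition S_set :: "nat \<Rightarrow> nat \<Rightarrow> nat list set \<Rightarrow> nat list set" where
  "S_set n m T = {xs. length xs = n \<and> ascent_seq xs \<and> asc xs = m \<and> (\<forall>tau\<in>T. avoids xs tau)}"

definition S_card :: "nat \<Rightarrow> nat \<Rightarrow> nat list set \<Rightarrow> nat" where
  "S_card n m T = card (S_set n m T)"

end

theory Submission
  imports Defs "HOL-Library.Sublist"
begin

(* Proof idea.  Each of the four pattern classes is described by a simple local condition on
   left-to-right maxima, and the two resulting conditions are related by a bijection.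

   (1) An ascent sequence avoids {0121, 0132}, equivalently {0121, 1032}, iff every nonzero
       entry is at least every earlier entry ("weak record sequence").
   (2) An ascent sequence avoids {0122, 0132}, equivalently {0122, 1032}, iff every entry
       that is at least 2 exceeds every earlier entry ("strict record sequence").
   In both cases the record condition is a sortedness property, inherited by subsequences,
   which no occurrence of the patterns satisfies.  Conversely, from a violating pair we take
   the first position r whose entry reaches the violated value; the ascent-sequence bound at
   r forces an ascent, and (when all earlier entries are smaller) also a descent, before r,
   which together with the violation produce the patterns.
   (3) Turning every nonzero entry that repeats the current prefix maximum into 1 maps weak
       record sequences to strict ones, preserves the positions of ascents (hence the
       ascent-sequence property and the number of ascents), and is inverted by raising
       every 1 to the current prefix maximum. *)

lemma subseq_map_nth:
  assumes "sorted_wrt (<) ns" "\<forall>k\<in>set ns. i \<le> k \<and> k < length xs"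
  shows "subseq (map ((!) xs) ns) (drop i xs)"
  using assms
proof (induction ns arbitrary: i)
  case (Cons k ks)
  have "subseq (map ((!) xs) ks) (drop (Suc k) xs)"
    using Cons by (auto simp: Suc_le_eq)
  then have "subseq (map ((!) xs) (k # ks)) (drop k xs)"
    using Cons.prems by (simp add: Cons_nth_drop_Suc[symmetric])
  moreover have "suffix (drop k xs) (drop i xs)"
    using Cons.prems suffix_drop[of "k - i" "drop i xs"] by simp
  ultimately show ?case by (blast intro: subseq_order.order_trans)
qed simp

lemma contains_at:
  assumes "sorted_wrt (<) ns" "\<forall>k\<in>set ns. k < length xs" "order_iso (map ((!) xs) ns) tau"
  shows "contains xs tau"
  using assms subseq_map_nth[of ns 0 xs] unfolding contains_def by auto

lemma order_iso_length: "order_iso ys tau \<Longrightarrow> length ys = length tau"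
  unfolding order_iso_def by simp

(* Sortedness for any relation passes to subsequences, so a sequence avoids a pattern of
   length four as soon as no order-isomorphic copy of the pattern is sorted. *)
lemma avoids_if_sorted_wrt:
  assumes "sorted_wrt R xs"
    and "\<And>a b c d. order_iso [a, b, c, d] [p, q, r, s] \<Longrightarrow> \<not> sorted_wrt R [a, b, c, d]"
  shows "avoids xs [p, q, r, s]"
  unfolding avoids_def contains_def
proof
  assume "\<exists>ys. ys \<in> set (subseqs xs) \<and> order_iso ys [p, q, r, s]"
  then obtain ys where ys: "subseq ys xs" "order_iso ys [p, q, r, s]" by auto
  then obtain a b c d where abcd: "ys = [a, b, c, d]"
    using order_iso_length[OF ys(2)] by (auto simp: numeral_eq_Suc length_Suc_conv)
  have "sorted_wrt R ys"
    using ys(1) assms(1) by (induction rule: list_emb.induct) (auto dest: list_emb_set)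
  then show False using assms(2) ys(2) abcd by blast
qed

lemma order_iso_0121: "order_iso [a, b, c, d] [0, 1, 2, 1] \<longleftrightarrow> a < b \<and> b < c \<and> d = b"
  unfolding order_iso_def by (simp add: All_less_Suc2 numeral_eq_Suc) arith

lemma order_iso_0122: "order_iso [a, b, c, d] [0, 1, 2, 2] \<longleftrightarrow> a < b \<and> b < c \<and> d = c"
  unfolding order_iso_def by (simp add: All_less_Suc2 numeral_eq_Suc) arith

lemma order_iso_0132: "order_iso [a, b, c, d] [0, 1, 3, 2] \<longleftrightarrow> a < b \<and> b < d \<and> d < c"
  unfolding order_iso_def by (simp add: All_less_Suc2 numeral_eq_Suc) arith

lemma order_iso_1032: "order_iso [a, b, c, d] [1, 0, 3, 2] \<longleftrightarrow> b < a \<and> a < d \<and> d < c"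
  unfolding order_iso_def by (simp add: All_less_Suc2 numeral_eq_Suc) arith

lemma contains_at_4:
  assumes "i < j" "j < k" "k < l" "l < length xs" "order_iso [xs!i, xs!j, xs!k, xs!l] tau"
  shows "contains xs tau"
  using assms by (intro contains_at[of "[i, j, k, l]"]) auto

definition ascents :: "nat list \<Rightarrow> nat set" where
  "ascents xs = {j. Suc j < length xs \<and> xs ! j < xs ! Suc j}"

lemma asc_card_ascents: "asc xs = card (ascents xs)"
  unfolding asc_def ascents_def ..

lemma finite_ascents: "finite (ascents xs)"
  unfolding ascents_def by (rule finite_subset[of _ "{..<length xs}"]) auto

lemma ascents_Cons2:
  "ascents (x # y # zs) = (if x < y then {0} else {}) \<union> Suc ` ascents (y # zs)"
proof (rule set_eqI)
  fix j
  show "j \<in> ascents (x # y # zs) \<longleftrightarrow> j \<in> (if x < y then {0} else {}) \<union> Suc ` ascents (y # zs)"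
    unfolding ascents_def by (cases j) (auto simp: image_iff)
qed

lemma asc_Cons2: "asc (x # y # zs) = (if x < y then 1 else 0) + asc (y # zs)"
  unfolding asc_card_ascents ascents_Cons2 using finite_ascents by (simp add: card_image)

(* A weakly increasing sequence climbs by at least one at each ascent. *)
lemma asc_sorted: "sorted xs \<Longrightarrow> xs \<noteq> [] \<Longrightarrow> asc xs + hd xs \<le> last xs"
proof (induction xs rule: induct_list012)
  case (3 x y zs)
  then have "asc (y # zs) + y \<le> last (y # zs)" by simp
  then show ?case using "3.prems" by (auto simp: asc_Cons2)
qed (auto simp: asc_card_ascents ascents_def)

lemma asc_pos: "0 < asc xs \<Longrightarrow> \<exists>p. Suc p < length xs \<and> xs ! p < xs ! Suc p"
  unfolding asc_card_ascents by (auto simp: card_gt_0_iff ascents_def)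

lemma asc_take_mono: "p \<le> i \<Longrightarrow> asc (take p xs) \<le> asc (take i xs)"
  unfolding asc_card_ascents by (intro card_mono finite_ascents) (auto simp: ascents_def)

lemma ascent_seq_0: "ascent_seq xs \<Longrightarrow> xs \<noteq> [] \<Longrightarrow> xs ! 0 = 0"
  unfolding ascent_seq_def by auto

lemma ascent_seq_bound:
  "ascent_seq xs \<Longrightarrow> 0 < i \<Longrightarrow> i < length xs \<Longrightarrow> xs ! i \<le> asc (take i xs) + 1"
  unfolding ascent_seq_def by auto

lemma ascent_before_large_entry:
  assumes "ascent_seq xs" "0 < j" "j < length xs" "2 \<le> xs ! j"
  shows "\<exists>p. Suc p < j \<and> xs ! p < xs ! Suc p"
proof -
  have "0 < asc (take j xs)" using ascent_seq_bound[OF assms(1-3)] assms(4) by linarith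
  then show ?thesis using asc_pos[of "take j xs"] assms(3) by auto
qed

(* If all entries before position j lie below v < x_j, there is a descent before j:
   otherwise the prefix is weakly increasing from 0 to below v, has fewer than v ascents,
   and the ascent-sequence bound would give x_j <= v. *)
lemma descent_before_new_value:
  assumes "ascent_seq xs" "0 < j" "j < length xs" "\<forall>i<j. xs ! i < v" "v < xs ! j"
  shows "\<exists>p q. p < q \<and> q < j \<and> xs ! q < xs ! p"
proof (rule ccontr)
  assume no_descent: "\<not> ?thesis"
  have "xs ! p \<le> xs ! q" if "p < q" "q < j" for p q
    using no_descent that leI by blast
  then have "sorted (take j xs)" unfolding sorted_wrt_iff_nth_less by simp
  moreover have ne: "take j xs \<noteq> []" using assms(2,3) by auto
  ultimately have "asc (take j xs) + hd (take j xs) \<le> last (take j xs)" by (rule asc_sorted)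
  moreover have "last (take j xs) < v" using assms(2-4) ne by (auto simp: last_conv_nth)
  ultimately show False using ascent_seq_bound[OF assms(1-3)] assms(5) by linarith
qed

definition weak_record_seq :: "nat list \<Rightarrow> bool" where
  "weak_record_seq xs \<longleftrightarrow> sorted_wrt (\<lambda>a b. b = 0 \<or> a \<le> b) xs"

definition strict_record_seq :: "nat list \<Rightarrow> bool" where
  "strict_record_seq xs \<longleftrightarrow> sorted_wrt (\<lambda>a b. b \<le> 1 \<or> a < b) xs"

lemma weak_record_seq_avoids:
  assumes "weak_record_seq xs"
  shows "avoids xs [0, 1, 2, 1]" "avoids xs [0, 1, 3, 2]" "avoids xs [1, 0, 3, 2]"
proof -
  have sorted: "sorted_wrt (\<lambda>a b. b = 0 \<or> a \<le> b) xs" using assms unfolding weak_record_seq_def .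
  show "avoids xs [0, 1, 2, 1]"
    by (rule avoids_if_sorted_wrt[OF sorted], unfold order_iso_0121) auto
  show "avoids xs [0, 1, 3, 2]"
    by (rule avoids_if_sorted_wrt[OF sorted], unfold order_iso_0132) auto
  show "avoids xs [1, 0, 3, 2]"
    by (rule avoids_if_sorted_wrt[OF sorted], unfold order_iso_1032) auto
qed

lemma strict_record_seq_avoids:
  assumes "strict_record_seq xs"
  shows "avoids xs [0, 1, 2, 2]" "avoids xs [0, 1, 3, 2]" "avoids xs [1, 0, 3, 2]"
proof -
  have sorted: "sorted_wrt (\<lambda>a b. b \<le> 1 \<or> a < b) xs" using assms unfolding strict_record_seq_def .
  show "avoids xs [0, 1, 2, 2]"
    by (rule avoids_if_sorted_wrt[OF sorted], unfold order_iso_0122) auto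
  show "avoids xs [0, 1, 3, 2]"
    by (rule avoids_if_sorted_wrt[OF sorted], unfold order_iso_0132) auto
  show "avoids xs [1, 0, 3, 2]"
    by (rule avoids_if_sorted_wrt[OF sorted], unfold order_iso_1032) auto
qed

(* A violation x_j > x_k = v > 0 (j < k) yields the patterns.  Let r be the first position
   with an entry above v.  If v occurs before r, then (0, that position, r, k) is a 0121;
   otherwise everything before r is below v and we find an ascent (giving 0132) and a
   descent (giving 1032) before r. *)
lemma contains_if_not_weak_record_seq:
  assumes "ascent_seq xs" "\<not> weak_record_seq xs"
  shows "contains xs [0, 1, 2, 1] \<or> (contains xs [0, 1, 3, 2] \<and> contains xs [1, 0, 3, 2])"
proof -
  obtain j k where jk: "j < k" "k < length xs" "0 < xs ! k" "xs ! k < xs ! j"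
    using assms(2) unfolding weak_record_seq_def sorted_wrt_iff_nth_less by auto
  define v where "v = xs ! k"
  define r where "r = (LEAST i. v < xs ! i)"
  have r: "v < xs ! r" "r \<le> j"
    using jk unfolding r_def v_def by (auto intro: LeastI Least_le)
  have before_r: "xs ! i \<le> v" if "i < r" for i
    using not_less_Least[of i "\<lambda>i. v < xs ! i"] that unfolding r_def by simp
  have x0: "xs ! 0 = 0" using jk by (intro ascent_seq_0[OF assms(1)]) auto
  have "0 < r" using r x0 by (cases r) auto
  have "r < k" "k < length xs" "0 < v" using r jk v_def by auto
  show ?thesis
  proof (cases "\<exists>i<r. xs ! i = v")
    case True
    then obtain i where i: "i < r" "xs ! i = v" by blast
    with x0 \<open>0 < v\<close> have "0 < i" by (cases i) auto
    with i r x0 \<open>r < k\<close> \<open>k < length xs\<close> \<open>0 < v\<close> have "contains xs [0, 1, 2, 1]"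
      by (intro contains_at_4[of 0 i r k], unfold order_iso_0121) (auto simp: v_def)
    then show ?thesis ..
  next
    case False
    with before_r have below: "\<forall>i<r. xs ! i < v" by (auto simp: le_less)
    obtain p where p: "Suc p < r" "xs ! p < xs ! Suc p"
      using ascent_before_large_entry[OF assms(1) \<open>0 < r\<close>] r \<open>r < k\<close> \<open>k < length xs\<close> \<open>0 < v\<close>
      by fastforce
    obtain p' q where pq: "p' < q" "q < r" "xs ! q < xs ! p'"
      using descent_before_new_value[OF assms(1) \<open>0 < r\<close> _ below r(1)] \<open>r < k\<close> \<open>k < length xs\<close>
      by auto
    have "contains xs [0, 1, 3, 2]"
      using p below r \<open>r < k\<close> \<open>k < length xs\<close>
      by (intro contains_at_4[of p "Suc p" r k], unfold order_iso_0132) (auto simp: v_def)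
    moreover have "contains xs [1, 0, 3, 2]"
      using pq below r \<open>r < k\<close> \<open>k < length xs\<close>
      by (intro contains_at_4[of p' q r k], unfold order_iso_1032) (auto simp: v_def)
    ultimately show ?thesis by blast
  qed
qed

(* A violation x_j >= x_k = v >= 2 (j < k) yields the patterns.  Let r be the first position
   with an entry at least v; an ascent before r gives 0122 if x_r = v and 0132 otherwise,
   in which case a descent before r gives 1032. *)
lemma contains_if_not_strict_record_seq:
  assumes "ascent_seq xs" "\<not> strict_record_seq xs"
  shows "(contains xs [0, 1, 2, 2] \<or> contains xs [0, 1, 3, 2]) \<and>
         (contains xs [0, 1, 2, 2] \<or> contains xs [1, 0, 3, 2])"
proof -
  obtain j k where jk: "j < k" "k < length xs" "2 \<le> xs ! k" "xs ! k \<le> xs ! j"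
    using assms(2) unfolding strict_record_seq_def sorted_wrt_iff_nth_less
    by (auto simp: not_le not_less)
  define v where "v = xs ! k"
  define r where "r = (LEAST i. v \<le> xs ! i)"
  have r: "v \<le> xs ! r" "r \<le> j"
    using jk unfolding r_def v_def by (auto intro: LeastI Least_le)
  have below: "\<forall>i<r. xs ! i < v"
    using not_less_Least[where P = "\<lambda>i. v \<le> xs ! i"] unfolding r_def by (auto simp: not_le)
  have x0: "xs ! 0 = 0" using jk by (intro ascent_seq_0[OF assms(1)]) auto
  have "2 \<le> v" using jk v_def by simp
  with r x0 have "0 < r" by (cases r) auto
  have "r < k" "k < length xs" using r jk by auto
  obtain p where p: "Suc p < r" "xs ! p < xs ! Suc p"
    using ascent_before_large_entry[OF assms(1) \<open>0 < r\<close>] r \<open>r < k\<close> \<open>k < length xs\<close> \<open>2 \<le> v\<close>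
    by fastforce
  show ?thesis
  proof (cases "xs ! r = v")
    case True
    with p below \<open>r < k\<close> \<open>k < length xs\<close> have "contains xs [0, 1, 2, 2]"
      by (intro contains_at_4[of p "Suc p" r k], unfold order_iso_0122) (auto simp: v_def)
    then show ?thesis by blast
  next
    case False
    with r have above: "v < xs ! r" by simp
    obtain p' q where pq: "p' < q" "q < r" "xs ! q < xs ! p'"
      using descent_before_new_value[OF assms(1) \<open>0 < r\<close> _ below above] \<open>r < k\<close> \<open>k < length xs\<close>
      by auto
    have "contains xs [0, 1, 3, 2]"
      using p below above \<open>r < k\<close> \<open>k < length xs\<close>
      by (intro contains_at_4[of p "Suc p" r k], unfold order_iso_0132) (auto simp: v_def)
    moreover have "contains xs [1, 0, 3, 2]"
      using pq below above \<open>r < k\<close> \<open>k < length xs\<close>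
      by (intro contains_at_4[of p' q r k], unfold order_iso_1032) (auto simp: v_def)
    ultimately show ?thesis by blast
  qed
qed

definition weak_record_class :: "nat \<Rightarrow> nat \<Rightarrow> nat list set" where
  "weak_record_class n m = {xs. length xs = n \<and> ascent_seq xs \<and> asc xs = m \<and> weak_record_seq xs}"

definition strict_record_class :: "nat \<Rightarrow> nat \<Rightarrow> nat list set" where
  "strict_record_class n m = {xs. length xs = n \<and> ascent_seq xs \<and> asc xs = m \<and> strict_record_seq xs}"

lemma S_set_weak_record_class:
  "S_set n m {[0, 1, 2, 1], [0, 1, 3, 2]} = weak_record_class n m"
  "S_set n m {[0, 1, 2, 1], [1, 0, 3, 2]} = weak_record_class n m"
  using weak_record_seq_avoids contains_if_not_weak_record_seq
  unfolding S_set_def weak_record_class_def avoids_def by blast+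

lemma S_set_strict_record_class:
  "S_set n m {[0, 1, 2, 2], [0, 1, 3, 2]} = strict_record_class n m"
  "S_set n m {[0, 1, 2, 2], [1, 0, 3, 2]} = strict_record_class n m"
  using strict_record_seq_avoids contains_if_not_strict_record_seq
  unfolding S_set_def strict_record_class_def avoids_def by blast+

(* The maximum of the first i entries (0 if there are none). *)
definition prefix_max :: "nat list \<Rightarrow> nat \<Rightarrow> nat" where
  "prefix_max xs i = Max (insert 0 (set (take i xs)))"

lemma prefix_max_le_iff: "i \<le> length xs \<Longrightarrow> prefix_max xs i \<le> c \<longleftrightarrow> (\<forall>p<i. xs ! p \<le> c)"
  unfolding prefix_max_def by (auto simp: set_conv_nth)

lemma prefix_max_less_iff:
  "i \<le> length xs \<Longrightarrow> prefix_max xs i < c \<longleftrightarrow> 0 < c \<and> (\<forall>p<i. xs ! p < c)"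
  unfolding prefix_max_def by (auto simp: set_conv_nth)

lemma prefix_max_Suc: "i < length xs \<Longrightarrow> prefix_max xs (Suc i) = max (prefix_max xs i) (xs ! i)"
proof -
  assume "i < length xs"
  then have "set (take (Suc i) xs) = insert (xs ! i) (set (take i xs))"
    by (simp add: take_Suc_conv_app_nth)
  then have "prefix_max xs (Suc i) = Max (insert (xs ! i) (insert 0 (set (take i xs))))"
    unfolding prefix_max_def by (simp add: insert_commute)
  also have "\<dots> = max (xs ! i) (prefix_max xs i)"
    unfolding prefix_max_def by (rule Max_insert) auto
  finally show ?thesis by (simp add: max.commute)
qed

lemma prefix_max_eqI:
  assumes "length ys = length xs"
    and "\<And>i. i < length xs \<Longrightarrow> max (prefix_max xs i) (ys ! i) = max (prefix_max xs i) (xs ! i)"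
    and "i \<le> length xs"
  shows "prefix_max ys i = prefix_max xs i"
  using assms(3)
proof (induction i)
  case 0
  then show ?case by (simp add: prefix_max_def)
next
  case (Suc i)
  then show ?case using assms(1) assms(2)[of i] by (simp add: prefix_max_Suc)
qed

lemma weak_record_seq_iff:
  "weak_record_seq xs \<longleftrightarrow> (\<forall>i < length xs. xs ! i = 0 \<or> prefix_max xs i \<le> xs ! i)"
  unfolding weak_record_seq_def sorted_wrt_iff_nth_less by (fastforce simp: prefix_max_le_iff)

lemma strict_record_seq_iff:
  "strict_record_seq xs \<longleftrightarrow> (\<forall>i < length xs. xs ! i \<le> 1 \<or> prefix_max xs i < xs ! i)"
  unfolding strict_record_seq_def sorted_wrt_iff_nth_less by (fastforce simp: prefix_max_less_iff)

lemma asc_take_eqI: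
  assumes "length ys = length xs"
    and "\<And>j. Suc j < length xs \<Longrightarrow> xs ! j < xs ! Suc j \<longleftrightarrow> ys ! j < ys ! Suc j"
  shows "asc (take i ys) = asc (take i xs)"
proof -
  have "ascents (take i ys) = ascents (take i xs)"
    using assms unfolding ascents_def by auto
  then show ?thesis by (simp add: asc_card_ascents)
qed

lemma prefix_max_ascent_bound:
  assumes "ascent_seq xs" "i \<le> length xs"
  shows "prefix_max xs i \<le> asc (take i xs) + 1"
  unfolding prefix_max_le_iff[OF assms(2)]
proof (intro allI impI)
  fix p assume "p < i"
  show "xs ! p \<le> asc (take i xs) + 1"
  proof (cases "p = 0")
    case True
    then show ?thesis using assms \<open>p < i\<close> ascent_seq_0 by fastforce
  next
    case False
    then have "xs ! p \<le> asc (take p xs) + 1"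
      using ascent_seq_bound assms \<open>p < i\<close> by simp
    also have "\<dots> \<le> asc (take i xs) + 1" using asc_take_mono[of p i xs] \<open>p < i\<close> by simp
    finally show ?thesis .
  qed
qed

lemma ascent_seq_transfer:
  assumes "ascent_seq xs" "length ys = length xs"
    and same_ascents: "\<And>j. Suc j < length xs \<Longrightarrow> xs ! j < xs ! Suc j \<longleftrightarrow> ys ! j < ys ! Suc j"
    and bound: "\<And>i. i < length xs \<Longrightarrow> ys ! i \<le> max (xs ! i) (prefix_max xs i)"
  shows "ascent_seq ys" "asc ys = asc xs"
proof -
  have asc_take: "asc (take i ys) = asc (take i xs)" for i
    using asc_take_eqI[OF assms(2) same_ascents] by blast
  show "asc ys = asc xs" using asc_take[of "length xs"] assms(2) by simp
  show "ascent_seq ys" unfolding ascent_seq_def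
  proof (intro conjI allI impI)
    assume "ys \<noteq> []"
    with assms(2) have "xs \<noteq> []" by auto
    then show "ys ! 0 = 0"
      using bound[of 0] ascent_seq_0[OF assms(1)] by (simp add: prefix_max_def)
  next
    fix i assume i: "0 < i \<and> i < length ys"
    have "xs ! i \<le> asc (take i xs) + 1" using ascent_seq_bound assms(1,2) i by simp
    moreover have "prefix_max xs i \<le> asc (take i xs) + 1"
      using prefix_max_ascent_bound assms(1,2) i by simp
    ultimately show "ys ! i \<le> asc (take i ys) + 1"
      using bound[of i] asc_take[of i] assms(2) i by simp
  qed
qed

definition lower_repeats :: "nat list \<Rightarrow> nat list" where
  "lower_repeats xs =
     map (\<lambda>i. if xs ! i \<noteq> 0 \<and> xs ! i = prefix_max xs i then 1 else xs ! i) [0..<length xs]"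

definition raise_ones :: "nat list \<Rightarrow> nat list" where
  "raise_ones xs = map (\<lambda>i. if xs ! i = 1 then max 1 (prefix_max xs i) else xs ! i) [0..<length xs]"

lemma length_lower_repeats [simp]: "length (lower_repeats xs) = length xs"
  unfolding lower_repeats_def by simp

lemma length_raise_ones [simp]: "length (raise_ones xs) = length xs"
  unfolding raise_ones_def by simp

lemma nth_lower_repeats:
  "i < length xs \<Longrightarrow>
     lower_repeats xs ! i = (if xs ! i \<noteq> 0 \<and> xs ! i = prefix_max xs i then 1 else xs ! i)"
  unfolding lower_repeats_def by simp

lemma nth_raise_ones:
  "i < length xs \<Longrightarrow> raise_ones xs ! i = (if xs ! i = 1 then max 1 (prefix_max xs i) else xs ! i)"
  unfolding raise_ones_def by simp

lemma prefix_max_lower_repeats: "i \<le> length xs \<Longrightarrow> prefix_max (lower_repeats xs) i = prefix_max xs i"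
  by (rule prefix_max_eqI) (auto simp: nth_lower_repeats max_def)

lemma prefix_max_raise_ones: "i \<le> length xs \<Longrightarrow> prefix_max (raise_ones xs) i = prefix_max xs i"
  by (rule prefix_max_eqI) (auto simp: nth_raise_ones max_def)

(* The local arithmetic behind preservation of ascents: the comparison of two consecutive
   entries, given the prefix maximum P before them and the record condition. *)
lemma lower_repeat_compare:
  fixes a b P :: nat
  assumes "a = 0 \<or> P \<le> a" "b = 0 \<or> max P a \<le> b"
  shows "a < b \<longleftrightarrow> (if a \<noteq> 0 \<and> a = P then 1 else a) < (if b \<noteq> 0 \<and> b = max P a then 1 else b)"
  using assms by (cases "a \<le> P") (auto simp: max_def)

lemma raise_one_compare:
  fixes a b P :: nat
  assumes "a \<le> 1 \<or> P < a" "b \<le> 1 \<or> max P a < b"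
  shows "a < b \<longleftrightarrow> (if a = 1 then max 1 P else a) < (if b = 1 then max 1 (max P a) else b)"
  using assms by (cases "a \<le> P") (auto simp: max_def)

lemma lower_repeats_same_ascents:
  assumes "weak_record_seq xs" "Suc j < length xs"
  shows "xs ! j < xs ! Suc j \<longleftrightarrow> lower_repeats xs ! j < lower_repeats xs ! Suc j"
proof -
  have records: "\<forall>i<length xs. xs ! i = 0 \<or> prefix_max xs i \<le> xs ! i"
    using assms(1) weak_record_seq_iff by blast
  have step: "prefix_max xs (Suc j) = max (prefix_max xs j) (xs ! j)"
    using assms(2) by (simp add: prefix_max_Suc)
  have this_entry: "xs ! j = 0 \<or> prefix_max xs j \<le> xs ! j"
    using records assms(2) by simp
  have next_entry: "xs ! Suc j = 0 \<or> max (prefix_max xs j) (xs ! j) \<le> xs ! Suc j"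
    using records assms(2) step by fastforce
  show ?thesis using lower_repeat_compare[OF this_entry next_entry] assms(2) step by (simp add: nth_lower_repeats)
qed

lemma raise_ones_same_ascents:
  assumes "strict_record_seq xs" "Suc j < length xs"
  shows "xs ! j < xs ! Suc j \<longleftrightarrow> raise_ones xs ! j < raise_ones xs ! Suc j"
proof -
  have records: "\<forall>i<length xs. xs ! i \<le> 1 \<or> prefix_max xs i < xs ! i"
    using assms(1) strict_record_seq_iff by blast
  have step: "prefix_max xs (Suc j) = max (prefix_max xs j) (xs ! j)"
    using assms(2) by (simp add: prefix_max_Suc)
  have this_entry: "xs ! j \<le> 1 \<or> prefix_max xs j < xs ! j"
    using records assms(2) by simp
  have next_entry: "xs ! Suc j \<le> 1 \<or> max (prefix_max xs j) (xs ! j) < xs ! Suc j"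
    using records assms(2) step by fastforce
  show ?thesis using raise_one_compare[OF this_entry next_entry] assms(2) step by (simp add: nth_raise_ones)
qed

lemma lower_repeats_props:
  assumes "ascent_seq xs" "weak_record_seq xs"
  shows "ascent_seq (lower_repeats xs)" "asc (lower_repeats xs) = asc xs"
    "strict_record_seq (lower_repeats xs)" "raise_ones (lower_repeats xs) = xs"
proof -
  have bound: "lower_repeats xs ! i \<le> max (xs ! i) (prefix_max xs i)" if "i < length xs" for i
    using that by (auto simp: nth_lower_repeats)
  show "ascent_seq (lower_repeats xs)" "asc (lower_repeats xs) = asc xs"
    using ascent_seq_transfer[OF assms(1) length_lower_repeats lower_repeats_same_ascents[OF assms(2)] bound]
    by auto
  have records: "\<forall>i<length xs. xs ! i = 0 \<or> prefix_max xs i \<le> xs ! i"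
    using assms(2) weak_record_seq_iff by blast
  show "strict_record_seq (lower_repeats xs)" unfolding strict_record_seq_iff
    using records by (auto simp: nth_lower_repeats prefix_max_lower_repeats)
  show "raise_ones (lower_repeats xs) = xs"
    using records
    by (intro nth_equalityI) (auto simp: nth_raise_ones nth_lower_repeats prefix_max_lower_repeats max_def)
qed

lemma raise_ones_props:
  assumes "ascent_seq xs" "strict_record_seq xs"
  shows "ascent_seq (raise_ones xs)" "asc (raise_ones xs) = asc xs"
    "weak_record_seq (raise_ones xs)" "lower_repeats (raise_ones xs) = xs"
proof -
  have bound: "raise_ones xs ! i \<le> max (xs ! i) (prefix_max xs i)" if "i < length xs" for i
    using that by (auto simp: nth_raise_ones)
  show "ascent_seq (raise_ones xs)" "asc (raise_ones xs) = asc xs"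
    using ascent_seq_transfer[OF assms(1) length_raise_ones raise_ones_same_ascents[OF assms(2)] bound]
    by auto
  have records: "\<forall>i<length xs. xs ! i \<le> 1 \<or> prefix_max xs i < xs ! i"
    using assms(2) strict_record_seq_iff by blast
  show "weak_record_seq (raise_ones xs)" unfolding weak_record_seq_iff
    using records by (auto simp: nth_raise_ones prefix_max_raise_ones)
  show "lower_repeats (raise_ones xs) = xs"
    using records
    by (intro nth_equalityI) (auto simp: nth_raise_ones nth_lower_repeats prefix_max_raise_ones max_def)
qed

lemma lower_repeats_bij:
  "bij_betw lower_repeats (weak_record_class n m) (strict_record_class n m)"
  by (rule bij_betw_byWitness[where f' = raise_ones])
    (auto simp: weak_record_class_def strict_record_class_def lower_repeats_props raise_ones_props)

(* All four counts equal the size of the weak record class. *)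
theorem proposition2:
  fixes n m :: nat
  assumes "1 \<le> n" and "m < n"
  shows "S_card n m {[0,1,2,1], [0,1,3,2]} = S_card n m {[0,1,2,1], [1,0,3,2]}
       \<and> S_card n m {[0,1,2,1], [1,0,3,2]} = S_card n m {[0,1,2,2], [0,1,3,2]}
       \<and> S_card n m {[0,1,2,2], [0,1,3,2]} = S_card n m {[0,1,2,2], [1,0,3,2]}"
  unfolding S_card_def S_set_weak_record_class S_set_strict_record_class
  using bij_betw_same_card[OF lower_repeats_bij] by simp

end
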